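(* For filters $\Xi,\Upsilon\in P_{III*}$, one has $\mathcal C_{\Xi\text{-unc}}=\mathcal C_{\Upsilon\text{-unc}}$ if and only if all four of the following inclusions hold: $(\wedge\Xi)\cap(\vee\overline\Upsilon)\subseteq\vee\overline\Xi$, $\quad\wedge\Xi\subseteq(\vee\overline\Xi)\cup(\wedge\Upsilon)$, $(\wedge\Upsilon)\cap(\vee\overline\Xi)\subseteq\vee\overline\Upsilon$, $\quad\wedge\Upsilon\subseteq(\vee\overline\Upsilon)\cup(\wedge\Xi)$.
   Context: Let $n\ge1$, $L=\{1,\dots,n\}$, and for $i\in L$ let $\mathcal H_i$ be a Hilbert space with $1<\dim\mathcal H_i<\infty$; $\mathcal H_X=\bigotimes_{i\in X}\mathcal H_i$ and $\mathcal D_X$ is the set of density operators on $\mathcal H_X$. $P_I$ is the set of partitions of $L$ ordered by refinement ($\upsilon\preceq\xi$ iff every part of $\upsilon$ lies in a part of $\xi$). For $\xi\in P_I$, $\mathcal D_{\xi\text{-unc}}=\{\varrho\in\mathcal D_L:\varrho=\bigotimes_{X\in\xi}\varrho_X,\ \varrho_X\in\mathcal D_X\}$, and for a set $S\subseteq P_I$, $\mathcal D_{S\text{-unc}}=\bigcup_{\xi\in S}\mathcal D_{\xi\text{-unc}}$. $P_{II}$ is the set of nonempty down-sets of $P_I$, ordered by inclusion. $P_{II*}\subseteq P_{II}$ is a fixed nonempty subset, and $P_{III*}$ is the set of nonempty up-sets of $P_{II*}$. For $\Xi\in P_{III*}$: $\overline\Xi=P_{II*}\setminus\Xi$, $\wedge\Xi=\bigcap_{\boldsymbol\xi\in\Xi}\boldsymbol\xi$,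 $\vee\overline\Xi=\bigcup_{\boldsymbol\xi'\in\overline\Xi}\boldsymbol\xi'$ (equal to $\emptyset$ if $\overline\Xi=\emptyset$), and $\mathcal C_{\Xi\text{-unc}}=\bigcap_{\boldsymbol\xi'\in\overline\Xi}(\mathcal D_L\setminus\mathcal D_{\boldsymbol\xi'\text{-unc}})\cap\bigcap_{\boldsymbol\xi\in\Xi}\mathcal D_{\boldsymbol\xi\text{-unc}}$. *)

theory Defs
  imports Complex_Main "HOL-Library.Disjoint_Sets" "HOL-Library.FuncSet"
begin

text \<open>Site i carries the Hilbert space C^(d i) with
  orthonormal basis indexed by {..< d i}. The space H_X for X a subset of L has
  orthonormal basis indexed by the extensional functions in PiE X (\<lambda>i. {..< d i});
  an operator on H_X is represented by its matrix in this basis, a function of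
  two basis indices, required to vanish outside basis x basis.\<close>

type_synonym op = "(nat \<Rightarrow> nat) \<Rightarrow> (nat \<Rightarrow> nat) \<Rightarrow> complex"

definition sites :: "nat \<Rightarrow> nat set" where
  "sites n = {1..n}"

definition basis :: "(nat \<Rightarrow> nat) \<Rightarrow> nat set \<Rightarrow> (nat \<Rightarrow> nat) set" where
  "basis d X = PiE X (\<lambda>i. {..< d i})"

definition density :: "(nat \<Rightarrow> nat) \<Rightarrow> nat set \<Rightarrow> op \<Rightarrow> bool" where
  "density d X \<rho> \<longleftrightarrow>
     (\<forall>a b. \<rho> a b \<noteq> 0 \<longrightarrow> a \<in> basis d X \<and> b \<in> basis d X) \<and>
     (\<forall>v :: (nat \<Rightarrow> nat) \<Rightarrow> complex.
        Im (\<Sum>a\<in>basis d X. \<Sum>b\<in>basis d X. cnj (v a) * \<rho> a b * v b) = 0 \<and>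
        Re (\<Sum>a\<in>basis d X. \<Sum>b\<in>basis d X. cnj (v a) * \<rho> a b * v b) \<ge> 0) \<and>
     (\<Sum>a\<in>basis d X. \<rho> a a) = 1"

definition densities :: "(nat \<Rightarrow> nat) \<Rightarrow> nat set \<Rightarrow> op set" where
  "densities d X = {\<rho>. density d X \<rho>}"

definition tensor :: "(nat \<Rightarrow> nat) \<Rightarrow> nat set \<Rightarrow> nat set set \<Rightarrow> (nat set \<Rightarrow> op) \<Rightarrow> op" where
  "tensor d X \<xi> \<rho>s = (\<lambda>a b. if a \<in> basis d X \<and> b \<in> basis d X
      then (\<Prod>Y\<in>\<xi>. \<rho>s Y (restrict a Y) (restrict b Y)) else 0)"

definition partitions :: "nat \<Rightarrow> nat set set set" where
  "partitions n = {\<xi>. partition_on (sites n) \<xi>}"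

definition refines :: "nat set set \<Rightarrow> nat set set \<Rightarrow> bool" where
  "refines \<upsilon> \<xi> \<longleftrightarrow> (\<forall>Y\<in>\<upsilon>. \<exists>X\<in>\<xi>. Y \<subseteq> X)"

definition unc :: "(nat \<Rightarrow> nat) \<Rightarrow> nat \<Rightarrow> nat set set \<Rightarrow> op set" where
  "unc d n \<xi> = {\<rho> \<in> densities d (sites n).
      \<exists>\<rho>s. (\<forall>X\<in>\<xi>. \<rho>s X \<in> densities d X) \<and> \<rho> = tensor d (sites n) \<xi> \<rho>s}"

definition uncS :: "(nat \<Rightarrow> nat) \<Rightarrow> nat \<Rightarrow> nat set set set \<Rightarrow> op set" where
  "uncS d n S = (\<Union>\<xi>\<in>S. unc d n \<xi>)"

definition P_II :: "nat \<Rightarrow> nat set set set set" where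
  "P_II n = {S. S \<subseteq> partitions n \<and> S \<noteq> {} \<and>
      (\<forall>\<xi>\<in>S. \<forall>\<upsilon>\<in>partitions n. refines \<upsilon> \<xi> \<longrightarrow> \<upsilon> \<in> S)}"

definition P_III :: "nat set set set set \<Rightarrow> nat set set set set set" where
  "P_III PIIs = {\<Xi>. \<Xi> \<subseteq> PIIs \<and> \<Xi> \<noteq> {} \<and>
      (\<forall>a\<in>\<Xi>. \<forall>b\<in>PIIs. a \<subseteq> b \<longrightarrow> b \<in> \<Xi>)}"

definition meet :: "nat set set set set \<Rightarrow> nat set set set" where
  "meet \<Xi> = \<Inter>\<Xi>"

definition join_compl :: "nat set set set set \<Rightarrow> nat set set set set \<Rightarrow> nat set set set" where
  "join_compl PIIs \<Xi> = \<Union>(PIIs - \<Xi>)"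

definition C_unc :: "(nat \<Rightarrow> nat) \<Rightarrow> nat \<Rightarrow> nat set set set set \<Rightarrow> nat set set set set \<Rightarrow> op set" where
  "C_unc d n PIIs \<Xi> =
     (\<Inter>s\<in>PIIs - \<Xi>. densities d (sites n) - uncS d n s) \<inter> (\<Inter>s\<in>\<Xi>. uncS d n s)"

end

theory Submission
  imports Defs
begin

text \<open>Every state \<open>\<rho>\<close> has a finest partition \<open>\<mu>\<close> along which it is uncorrelated: the
  trivial partition \<open>{L}\<close> always works, and a state that is a product along \<open>\<xi>\<close> and along \<open>\<eta>\<close>
  is the product of its marginals along their common refinement. As the members of \<open>P_II\<close> are
  down-sets, \<open>\<rho>\<close> is \<open>S\<close>-uncorrelated iff \<open>\<mu> \<in> S\<close>, so \<open>\<rho> \<in> C_unc d n PIIs \<Xi>\<close> iff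
  \<open>\<mu> \<in> meet \<Xi> - join_compl PIIs \<Xi>\<close>. Conversely, since every \<open>dim H_i \<ge> 2\<close>, each partition
  is the finest one of some state, namely the product of GHZ states over its blocks. Hence the
  classes of \<open>\<Xi>\<close> and \<open>\<Upsilon>\<close> coincide iff these sets of partitions do, and that set equality is the
  conjunction of the four inclusions.\<close>

definition merge :: "nat set \<Rightarrow> (nat \<Rightarrow> nat) \<Rightarrow> (nat \<Rightarrow> nat) \<Rightarrow> nat \<Rightarrow> nat" where
  "merge X p c = (\<lambda>i. if i \<in> X then p i else c i)"

lemma basis_undefined: "x \<in> basis d X \<Longrightarrow> i \<notin> X \<Longrightarrow> x i = undefined"
  by (auto simp: basis_def PiE_iff extensional_def)

lemma finite_basis: "finite X \<Longrightarrow> finite (basis d X)"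
  by (auto simp: basis_def intro: finite_PiE)

lemma basis_empty: "basis d {} = {\<lambda>_. undefined}"
  by (simp add: basis_def)

lemma restrict_in_basis: "a \<in> basis d V \<Longrightarrow> X \<subseteq> V \<Longrightarrow> restrict a X \<in> basis d X"
  by (auto simp: basis_def PiE_iff)

lemma restrict_basis_superset: "p \<in> basis d Z \<Longrightarrow> Z \<subseteq> Y \<Longrightarrow> restrict p Y = p"
  by (force simp: fun_eq_iff basis_undefined)

lemma merge_in_basis: "a \<in> basis d V \<Longrightarrow> a' \<in> basis d V \<Longrightarrow> merge Y a a' \<in> basis d V"
  by (auto simp: basis_def merge_def PiE_iff extensional_def)

lemma merge_in_basis_Un: "p \<in> basis d Z \<Longrightarrow> c \<in> basis d W \<Longrightarrow> merge Z p c \<in> basis d (Z \<union> W)"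
  by (auto simp: basis_def merge_def PiE_iff extensional_def)

lemma restrict_merge: "restrict (merge X a c) Y = merge X (restrict a Y) (restrict c Y)"
  by (auto simp: merge_def fun_eq_iff)

lemma restrict_merge_same: "restrict (merge Y p c) Y = restrict p Y"
  by (auto simp: merge_def fun_eq_iff)

lemma restrict_merge_disjoint: "Y \<inter> Y' = {} \<Longrightarrow> restrict (merge Y p c) Y' = restrict c Y'"
  by (auto simp: merge_def fun_eq_iff)

lemma restrict_merge_left: "p \<in> basis d Z \<Longrightarrow> restrict (merge Z p c) Z = p"
  by (auto simp: basis_def merge_def PiE_iff extensional_def fun_eq_iff)

lemma restrict_merge_right: "c \<in> basis d W \<Longrightarrow> Z \<inter> W = {} \<Longrightarrow> restrict (merge Z p c) W = c"
  by (auto simp: basis_def merge_def PiE_iff extensional_def fun_eq_iff)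

lemma merge_restrict: "x \<in> basis d (Z \<union> W) \<Longrightarrow> merge Z (restrict x Z) (restrict x W) = x"
  by (auto simp: basis_def merge_def PiE_iff extensional_def fun_eq_iff)

lemma bij_betw_merge:
  "Z \<inter> W = {} \<Longrightarrow> bij_betw (\<lambda>(p, c). merge Z p c) (basis d Z \<times> basis d W) (basis d (Z \<union> W))"
  by (rule bij_betw_byWitness[where f' = "\<lambda>x. (restrict x Z, restrict x W)"])
     (auto simp: restrict_merge_left restrict_merge_right merge_restrict merge_in_basis_Un
        restrict_in_basis)

lemma sum_basis_Un:
  assumes "Z \<inter> W = {}"
  shows "(\<Sum>x\<in>basis d (Z \<union> W). f x) = (\<Sum>p\<in>basis d Z. \<Sum>c\<in>basis d W. f (merge Z p c))"
proof -
  have "(\<Sum>x\<in>basis d (Z \<union> W). f x) = (\<Sum>(p, c)\<in>basis d Z \<times> basis d W. f (merge Z p c))"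
    using sum.reindex_bij_betw[OF bij_betw_merge[OF assms], of f] by (simp add: case_prod_beta')
  then show ?thesis
    by (simp add: sum.cartesian_product)
qed

lemma sum_basis_fibre:
  assumes "Z \<subseteq> V" "finite V" "c \<in> basis d (V - Z)"
  shows "(\<Sum>x\<in>basis d V. if restrict x (V - Z) = c then f (restrict x Z) x else 0)
       = (\<Sum>p\<in>basis d Z. f p (merge Z p c))"
proof -
  have disj: "Z \<inter> (V - Z) = {}" by auto
  have V: "V = Z \<union> (V - Z)"
    using assms(1) by auto
  have "(\<Sum>x\<in>basis d V. if restrict x (V - Z) = c then f (restrict x Z) x else 0)
     = (\<Sum>p\<in>basis d Z. \<Sum>c'\<in>basis d (V - Z). if c' = c then f p (merge Z p c') else 0)"
    by (subst V, subst sum_basis_Un[OF disj])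
       (intro sum.cong refl, simp add: restrict_merge_left restrict_merge_right[OF _ disj])
  also have "\<dots> = (\<Sum>p\<in>basis d Z. f p (merge Z p c))"
    using assms by (simp add: finite_basis)
  finally show ?thesis .
qed

lemma sum_basis_UN_prod:
  fixes g :: "nat set \<Rightarrow> (nat \<Rightarrow> nat) \<Rightarrow> complex"
  assumes "finite \<eta>" "disjoint_family_on S \<eta>"
  shows "(\<Sum>c\<in>basis d (\<Union>Y\<in>\<eta>. S Y). \<Prod>Y\<in>\<eta>. g Y (restrict c (S Y)))
       = (\<Prod>Y\<in>\<eta>. \<Sum>c\<in>basis d (S Y). g Y c)"
  using assms
proof (induction \<eta> rule: finite_induct)
  case empty
  show ?case by (simp add: basis_empty)
next
  case (insert Y \<eta>)
  have IH: "(\<Sum>c\<in>basis d (\<Union>Y\<in>\<eta>. S Y). \<Prod>Y\<in>\<eta>. g Y (restrict c (S Y))) = (\<Prod>Y\<in>\<eta>. \<Sum>c\<in>basis d (S Y). g Y c)"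
    using insert.IH insert.prems disjoint_family_on_mono[OF subset_insertI] by metis
  have disj: "S Y \<inter> S Y' = {}" if "Y' \<in> \<eta>" for Y'
    using insert that by (auto simp: disjoint_family_on_def)
  then have "S Y \<inter> (\<Union>Y\<in>\<eta>. S Y) = {}" by blast
  then have "(\<Sum>c\<in>basis d (\<Union>Y\<in>insert Y \<eta>. S Y). \<Prod>Y'\<in>insert Y \<eta>. g Y' (restrict c (S Y')))
      = (\<Sum>p\<in>basis d (S Y). \<Sum>c\<in>basis d (\<Union>Y\<in>\<eta>. S Y).
           g Y p * (\<Prod>Y'\<in>\<eta>. g Y' (restrict c (S Y'))))"
    using insert.hyps
    by (simp add: sum_basis_Un restrict_merge_left restrict_merge_disjoint disj cong: prod.cong sum.cong)
  also have "\<dots> = (\<Prod>Y'\<in>insert Y \<eta>. \<Sum>c\<in>basis d (S Y'). g Y' c)"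
    using insert.hyps by (simp add: sum_product[symmetric] IH)
  finally show ?case .
qed

definition op_trace :: "(nat \<Rightarrow> nat) \<Rightarrow> nat set \<Rightarrow> op \<Rightarrow> complex" where
  "op_trace d X \<sigma> = (\<Sum>a\<in>basis d X. \<sigma> a a)"

definition qform :: "(nat \<Rightarrow> nat) \<Rightarrow> nat set \<Rightarrow> op \<Rightarrow> ((nat \<Rightarrow> nat) \<Rightarrow> complex) \<Rightarrow> complex" where
  "qform d X \<rho> v = (\<Sum>a\<in>basis d X. \<Sum>b\<in>basis d X. cnj (v a) * \<rho> a b * v b)"

lemma density_iff:
  "density d X \<rho> \<longleftrightarrow>
     (\<forall>a b. \<rho> a b \<noteq> 0 \<longrightarrow> a \<in> basis d X \<and> b \<in> basis d X) \<and>
     (\<forall>v. Im (qform d X \<rho> v) = 0 \<and> Re (qform d X \<rho> v) \<ge> 0) \<and> op_trace d X \<rho> = 1"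
  by (simp add: density_def qform_def op_trace_def)

lemma density_vanishes: "density d X \<rho> \<Longrightarrow> \<not> (a \<in> basis d X \<and> b \<in> basis d X) \<Longrightarrow> \<rho> a b = 0"
  by (auto simp: density_def)

definition partial_trace :: "(nat \<Rightarrow> nat) \<Rightarrow> nat set \<Rightarrow> nat set \<Rightarrow> op \<Rightarrow> op" where
  "partial_trace d Y X \<sigma> p q = (\<Sum>c\<in>basis d (Y - X). \<sigma> (merge X p c) (merge X q c))"

definition marginal :: "(nat \<Rightarrow> nat) \<Rightarrow> nat set \<Rightarrow> nat set \<Rightarrow> op \<Rightarrow> op" where
  "marginal d V Z \<rho> p q =
     (if p \<in> basis d Z \<and> q \<in> basis d Z then partial_trace d V Z \<rho> p q else 0)"

lemma partial_trace_disjoint: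
  assumes "X \<inter> Y = {}"
  shows "partial_trace d Y X \<sigma> (restrict p Y) (restrict q Y) = op_trace d Y \<sigma>"
proof -
  have "merge X (restrict p Y) c = c" if "c \<in> basis d Y" for c p
    using assms that by (auto simp: merge_def fun_eq_iff basis_undefined)
  moreover have "Y - X = Y"
    using assms by auto
  ultimately show ?thesis
    by (simp add: partial_trace_def op_trace_def)
qed

lemma partial_trace_subset:
  assumes "Y \<subseteq> X"
  shows "partial_trace d Y X \<sigma> (restrict p Y) (restrict q Y) = \<sigma> (restrict p Y) (restrict q Y)"
proof -
  have "merge X (restrict p Y) (\<lambda>_. undefined) = restrict p Y" for p
    using assms by (auto simp: merge_def fun_eq_iff)
  moreover have "Y - X = {}"
    using assms by auto
  ultimately show ?thesis
    unfolding partial_trace_def by (simp only: basis_empty) simp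
qed

lemma partial_trace_restrict_Int:
  "partial_trace d Y X \<sigma> (restrict p (X \<inter> Y)) (restrict q (X \<inter> Y))
     = partial_trace d Y (X \<inter> Y) \<sigma> (restrict p (X \<inter> Y)) (restrict q (X \<inter> Y))"
proof -
  have "merge X (restrict p (X \<inter> Y)) c = merge (X \<inter> Y) (restrict p (X \<inter> Y)) c"
    if "c \<in> basis d (Y - X)" for c p
    using that by (auto simp: merge_def fun_eq_iff basis_undefined)
  moreover have "Y - X \<inter> Y = Y - X"
    by auto
  ultimately show ?thesis
    by (simp add: partial_trace_def)
qed

lemma tensor_apply:
  "a \<in> basis d V \<Longrightarrow> b \<in> basis d V \<Longrightarrow>
     tensor d V \<xi> \<rho>s a b = (\<Prod>Y\<in>\<xi>. \<rho>s Y (restrict a Y) (restrict b Y))"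
  by (simp add: tensor_def)

lemma partial_trace_tensor:
  assumes \<eta>: "partition_on V \<eta>" and "finite V" "X \<subseteq> V"
    and p: "p \<in> basis d X" and q: "q \<in> basis d X"
  shows "partial_trace d V X (tensor d V \<eta> \<sigma>s) p q
       = (\<Prod>Y\<in>\<eta>. partial_trace d Y X (\<sigma>s Y) (restrict p Y) (restrict q Y))"
proof -
  have "finite \<eta>"
    using assms finite_elements by blast
  have disj: "disjoint_family_on (\<lambda>Y. Y - X) \<eta>"
    using \<eta> by (auto simp: partition_on_def disjoint_family_on_def disjoint_def)
  have V: "(\<Union>Y\<in>\<eta>. Y - X) = V - X"
    using \<eta> by (auto simp: partition_on_def)
  have "partial_trace d V X (tensor d V \<eta> \<sigma>s) p q
      = (\<Sum>c\<in>basis d (V - X). \<Prod>Y\<in>\<eta>. \<sigma>s Y (merge X (restrict p Y) (restrict c (Y - X)))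
                                            (merge X (restrict q Y) (restrict c (Y - X))))"
    unfolding partial_trace_def
  proof (rule sum.cong[OF refl])
    fix c assume c: "c \<in> basis d (V - X)"
    have "X \<union> (V - X) = V"
      using \<open>X \<subseteq> V\<close> by auto
    then have "merge X p c \<in> basis d V" "merge X q c \<in> basis d V"
      using merge_in_basis_Un[OF p c] merge_in_basis_Un[OF q c] by auto
    moreover have "restrict c Y = restrict c (Y - X)" for Y
      using c by (auto simp: fun_eq_iff basis_undefined)
    ultimately show "tensor d V \<eta> \<sigma>s (merge X p c) (merge X q c)
      = (\<Prod>Y\<in>\<eta>. \<sigma>s Y (merge X (restrict p Y) (restrict c (Y - X)))
                         (merge X (restrict q Y) (restrict c (Y - X))))"
      by (simp add: tensor_apply restrict_merge)
  qed
  also have "\<dots> = (\<Prod>Y\<in>\<eta>. partial_trace d Y X (\<sigma>s Y) (restrict p Y) (restrict q Y))"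
    using sum_basis_UN_prod[OF \<open>finite \<eta>\<close> disj, where d = d
        and g = "\<lambda>Y c. \<sigma>s Y (merge X (restrict p Y) c) (merge X (restrict q Y) c)"]
    unfolding V partial_trace_def .
  finally show ?thesis .
qed

lemma partial_trace_tensor_block:
  assumes \<eta>: "partition_on V \<eta>" and "finite V" and tr: "\<forall>Y\<in>\<eta>. op_trace d Y (\<sigma>s Y) = 1"
    and Y: "Y \<in> \<eta>" and "Z \<subseteq> Y" and p: "p \<in> basis d Z" and q: "q \<in> basis d Z"
  shows "partial_trace d V Z (tensor d V \<eta> \<sigma>s) p q = partial_trace d Y Z (\<sigma>s Y) p q"
proof -
  have "Z \<subseteq> V"
    using \<eta> Y \<open>Z \<subseteq> Y\<close> by (auto simp: partition_on_def)
  have factor: "partial_trace d Y' Z (\<sigma>s Y') (restrict p Y') (restrict q Y')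
      = (if Y' = Y then partial_trace d Y Z (\<sigma>s Y) p q else 1)" if "Y' \<in> \<eta>" for Y'
  proof (cases "Y' = Y")
    case True
    then show ?thesis
      using restrict_basis_superset[OF p \<open>Z \<subseteq> Y\<close>] restrict_basis_superset[OF q \<open>Z \<subseteq> Y\<close>]
      by simp
  next
    case False
    then have "Z \<inter> Y' = {}"
      using \<eta> Y that \<open>Z \<subseteq> Y\<close> by (auto dest: partition_onD2 disjointD)
    then show ?thesis
      using False partial_trace_disjoint tr that by simp
  qed
  have "finite \<eta>"
    using assms finite_elements by blast
  then show ?thesis
    using partial_trace_tensor[OF \<eta> \<open>finite V\<close> \<open>Z \<subseteq> V\<close> p q] factor Y
    by (simp add: prod.delta' cong: prod.cong)
qed

lemma partial_trace_tensor_factor: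
  assumes "partition_on V \<eta>" "finite V" "\<forall>Y\<in>\<eta>. op_trace d Y (\<sigma>s Y) = 1"
    and "Y \<in> \<eta>" and p: "p \<in> basis d Y" and q: "q \<in> basis d Y"
  shows "partial_trace d V Y (tensor d V \<eta> \<sigma>s) p q = \<sigma>s Y p q"
  using partial_trace_tensor_block[OF assms(1-4) order.refl p q]
    partial_trace_subset[of Y Y d "\<sigma>s Y" p q]
    restrict_basis_superset[OF p order.refl] restrict_basis_superset[OF q order.refl]
  by simp

lemma qform_marginal:
  assumes "Z \<subseteq> V" "finite V"
  shows "qform d Z (marginal d V Z \<rho>) v
       = (\<Sum>c\<in>basis d (V - Z).
            qform d V \<rho> (\<lambda>x. if restrict x (V - Z) = c then v (restrict x Z) else 0))"
proof -
  have "qform d Z (marginal d V Z \<rho>) v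
      = (\<Sum>p\<in>basis d Z. \<Sum>q\<in>basis d Z. \<Sum>c\<in>basis d (V - Z).
           cnj (v p) * \<rho> (merge Z p c) (merge Z q c) * v q)"
    unfolding qform_def
    by (intro sum.cong refl) (simp add: marginal_def partial_trace_def sum_distrib_left sum_distrib_right)
  also have "\<dots> = (\<Sum>c\<in>basis d (V - Z). \<Sum>p\<in>basis d Z. \<Sum>q\<in>basis d Z.
           cnj (v p) * \<rho> (merge Z p c) (merge Z q c) * v q)"
    by (simp only: sum.swap[where B = "basis d (V - Z)"])
  also have "\<dots> = (\<Sum>c\<in>basis d (V - Z).
            qform d V \<rho> (\<lambda>x. if restrict x (V - Z) = c then v (restrict x Z) else 0))"
  proof (rule sum.cong[OF refl])
    fix c assume c: "c \<in> basis d (V - Z)"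
    define w where "w x = (if restrict x (V - Z) = c then v (restrict x Z) else 0)" for x
    have "(\<Sum>y\<in>basis d V. cnj (w x) * \<rho> x y * w y)
        = (\<Sum>q\<in>basis d Z. cnj (w x) * \<rho> x (merge Z q c) * v q)" for x
    proof -
      have "(\<Sum>y\<in>basis d V. cnj (w x) * \<rho> x y * w y)
          = (\<Sum>y\<in>basis d V. if restrict y (V - Z) = c
               then (\<lambda>q y. cnj (w x) * \<rho> x y * v q) (restrict y Z) y else 0)"
        by (intro sum.cong refl) (simp add: w_def)
      also have "\<dots> = (\<Sum>q\<in>basis d Z. cnj (w x) * \<rho> x (merge Z q c) * v q)"
        by (rule sum_basis_fibre[OF assms c])
      finally show ?thesis .
    qed
    then have "qform d V \<rho> w = (\<Sum>x\<in>basis d V. \<Sum>q\<in>basis d Z. cnj (w x) * \<rho> x (merge Z q c) * v q)"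
      by (simp add: qform_def)
    also have "\<dots> = (\<Sum>x\<in>basis d V. if restrict x (V - Z) = c then
            (\<lambda>p x. \<Sum>q\<in>basis d Z. cnj (v p) * \<rho> x (merge Z q c) * v q) (restrict x Z) x else 0)"
      by (intro sum.cong refl) (simp add: w_def)
    also have "\<dots> = (\<Sum>p\<in>basis d Z. \<Sum>q\<in>basis d Z. cnj (v p) * \<rho> (merge Z p c) (merge Z q c) * v q)"
      by (rule sum_basis_fibre[OF assms c])
    finally show "(\<Sum>p\<in>basis d Z. \<Sum>q\<in>basis d Z. cnj (v p) * \<rho> (merge Z p c) (merge Z q c) * v q)
        = qform d V \<rho> w" ..
  qed
  finally show ?thesis .
qed

lemma density_marginal:
  assumes \<rho>: "density d V \<rho>" and "Z \<subseteq> V" "finite V"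
  shows "density d Z (marginal d V Z \<rho>)"
proof -
  have "Im (qform d Z (marginal d V Z \<rho>) v) = 0 \<and> Re (qform d Z (marginal d V Z \<rho>) v) \<ge> 0" for v
    using \<rho> unfolding qform_marginal[OF assms(2,3)] density_iff by (simp add: sum_nonneg)
  moreover have "op_trace d Z (marginal d V Z \<rho>) = op_trace d V \<rho>"
  proof -
    have "Z \<inter> (V - Z) = {}" "Z \<union> (V - Z) = V"
      using \<open>Z \<subseteq> V\<close> by auto
    then show ?thesis
      using sum_basis_Un[where Z = Z and W = "V - Z" and d = d and f = "\<lambda>x. \<rho> x x"]
      by (simp add: op_trace_def marginal_def partial_trace_def)
  qed
  ultimately show ?thesis
    using \<rho> by (auto simp: density_iff marginal_def)
qed

definition partition_inf :: "nat set set \<Rightarrow> nat set set \<Rightarrow> nat set set" where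
  "partition_inf \<xi> \<eta> = {X \<inter> Y | X Y. X \<in> \<xi> \<and> Y \<in> \<eta> \<and> X \<inter> Y \<noteq> {}}"

lemma partition_on_eq: "partition_on V \<xi> \<Longrightarrow> X \<in> \<xi> \<Longrightarrow> X' \<in> \<xi> \<Longrightarrow> i \<in> X \<Longrightarrow> i \<in> X' \<Longrightarrow> X = X'"
  by (metis disjoint_iff disjointD partition_onD2)

lemma partition_on_partition_inf:
  assumes \<xi>: "partition_on V \<xi>" and \<eta>: "partition_on V \<eta>"
  shows "partition_on V (partition_inf \<xi> \<eta>)"
proof (rule partition_onI)
  show "\<Union>(partition_inf \<xi> \<eta>) = V"
  proof
    show "\<Union>(partition_inf \<xi> \<eta>) \<subseteq> V"
      using \<xi> by (auto simp: partition_inf_def partition_on_def)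
    show "V \<subseteq> \<Union>(partition_inf \<xi> \<eta>)"
    proof
      fix i assume "i \<in> V"
      then obtain X Y where "X \<in> \<xi>" "Y \<in> \<eta>" "i \<in> X" "i \<in> Y"
        using \<xi> \<eta> by (metis UnionE partition_onD1)
      then show "i \<in> \<Union>(partition_inf \<xi> \<eta>)"
        unfolding partition_inf_def by blast
    qed
  qed
  show "disjnt Z Z'" if "Z \<in> partition_inf \<xi> \<eta>" "Z' \<in> partition_inf \<xi> \<eta>" "Z \<noteq> Z'" for Z Z'
    using that partition_on_eq[OF \<xi>] partition_on_eq[OF \<eta>]
    unfolding partition_inf_def disjnt_def by blast
  show "{} \<notin> partition_inf \<xi> \<eta>"
    unfolding partition_inf_def by auto
qed

lemma refines_trans: "refines \<xi> \<eta> \<Longrightarrow> refines \<eta> \<zeta> \<Longrightarrow> refines \<xi> \<zeta>"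
  unfolding refines_def by (meson order_trans)

lemma refines_partition_inf: "refines (partition_inf \<xi> \<eta>) \<xi>" "refines (partition_inf \<xi> \<eta>) \<eta>"
  unfolding refines_def partition_inf_def by auto

lemma prod_partition_inf:
  fixes f :: "nat set \<Rightarrow> complex"
  assumes \<xi>: "partition_on V \<xi>" and \<eta>: "partition_on V \<eta>" and "finite V"
  shows "(\<Prod>X\<in>\<xi>. \<Prod>Y\<in>\<eta>. if X \<inter> Y = {} then 1 else f (X \<inter> Y)) = (\<Prod>Z\<in>partition_inf \<xi> \<eta>. f Z)"
proof -
  define P where "P = {XY \<in> \<xi> \<times> \<eta>. fst XY \<inter> snd XY \<noteq> {}}"
  have "finite \<xi>" "finite \<eta>"
    using assms finite_elements by blast+
  then have "(\<Prod>X\<in>\<xi>. \<Prod>Y\<in>\<eta>. if X \<inter> Y = {} then 1 else f (X \<inter> Y))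
      = (\<Prod>XY\<in>\<xi> \<times> \<eta>. if fst XY \<inter> snd XY = {} then 1 else f (fst XY \<inter> snd XY))"
    by (simp add: prod.cartesian_product split_def)
  also have "\<dots> = (\<Prod>XY\<in>P. f (fst XY \<inter> snd XY))"
    unfolding P_def using \<open>finite \<xi>\<close> \<open>finite \<eta>\<close>
    by (subst prod.inter_filter) (auto intro: prod.cong)
  also have "\<dots> = (\<Prod>Z\<in>(\<lambda>XY. fst XY \<inter> snd XY) ` P. f Z)"
  proof -
    have "inj_on (\<lambda>XY. fst XY \<inter> snd XY) P"
    proof (rule inj_onI)
      fix u w assume "u \<in> P" "w \<in> P" and eq: "fst u \<inter> snd u = fst w \<inter> snd w"
      then obtain i where "i \<in> fst u \<inter> snd u" "i \<in> fst w \<inter> snd w"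
        unfolding P_def by auto
      moreover have "fst u \<in> \<xi>" "snd u \<in> \<eta>" "fst w \<in> \<xi>" "snd w \<in> \<eta>"
        using \<open>u \<in> P\<close> \<open>w \<in> P\<close> unfolding P_def by auto
      ultimately have "fst u = fst w" "snd u = snd w"
        using partition_on_eq[OF \<xi>, of "fst u" "fst w" i] partition_on_eq[OF \<eta>, of "snd u" "snd w" i]
        by auto
      then show "u = w"
        by (simp add: prod_eq_iff)
    qed
    then show ?thesis
      by (simp add: prod.reindex)
  qed
  also have "(\<lambda>XY. fst XY \<inter> snd XY) ` P = partition_inf \<xi> \<eta>"
    unfolding P_def partition_inf_def by force
  finally show ?thesis .
qed

text \<open>Trace out the other blocks of \<open>\<xi>\<close> using the \<open>\<xi>\<close>-decomposition, then factorise the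
  result along \<open>\<eta>\<close>.\<close>

lemma tensor_factor_eq_prod_marginal:
  assumes \<xi>: "partition_on V \<xi>" and \<eta>: "partition_on V \<eta>" and "finite V"
    and tr\<xi>: "\<forall>X\<in>\<xi>. op_trace d X (\<rho>s X) = 1" and \<rho>\<xi>: "\<rho> = tensor d V \<xi> \<rho>s"
    and tr\<eta>: "\<forall>Y\<in>\<eta>. op_trace d Y (\<sigma>s Y) = 1" and \<rho>\<eta>: "\<rho> = tensor d V \<eta> \<sigma>s"
    and X: "X \<in> \<xi>" and a: "a \<in> basis d V" and b: "b \<in> basis d V"
  shows "\<rho>s X (restrict a X) (restrict b X)
       = (\<Prod>Y\<in>\<eta>. if X \<inter> Y = {} then 1
                  else marginal d V (X \<inter> Y) \<rho> (restrict a (X \<inter> Y)) (restrict b (X \<inter> Y)))"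
proof -
  have "X \<subseteq> V"
    using \<xi> X by (auto simp: partition_on_def)
  have aX: "restrict a X \<in> basis d X" and bX: "restrict b X \<in> basis d X"
    using restrict_in_basis[OF a \<open>X \<subseteq> V\<close>] restrict_in_basis[OF b \<open>X \<subseteq> V\<close>] .
  have "\<rho>s X (restrict a X) (restrict b X) = partial_trace d V X \<rho> (restrict a X) (restrict b X)"
    using partial_trace_tensor_factor[OF \<xi> \<open>finite V\<close> tr\<xi> X aX bX, folded \<rho>\<xi>] ..
  also have "\<dots> = (\<Prod>Y\<in>\<eta>. partial_trace d Y X (\<sigma>s Y) (restrict (restrict a X) Y) (restrict (restrict b X) Y))"
    using partial_trace_tensor[OF \<eta> \<open>finite V\<close> \<open>X \<subseteq> V\<close> aX bX, where \<sigma>s = \<sigma>s, folded \<rho>\<eta>] .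
  also have "\<dots> = (\<Prod>Y\<in>\<eta>. if X \<inter> Y = {} then 1
                  else marginal d V (X \<inter> Y) \<rho> (restrict a (X \<inter> Y)) (restrict b (X \<inter> Y)))"
  proof (rule prod.cong[OF refl])
    fix Y assume Y: "Y \<in> \<eta>"
    show "partial_trace d Y X (\<sigma>s Y) (restrict (restrict a X) Y) (restrict (restrict b X) Y)
        = (if X \<inter> Y = {} then 1
           else marginal d V (X \<inter> Y) \<rho> (restrict a (X \<inter> Y)) (restrict b (X \<inter> Y)))"
    proof (cases "X \<inter> Y = {}")
      case True
      then show ?thesis
        using partial_trace_disjoint[OF True, of d "\<sigma>s Y" "restrict a X" "restrict b X"] tr\<eta> Y
        by simp
    next
      case False
      have aXY: "restrict a (X \<inter> Y) \<in> basis d (X \<inter> Y)" and bXY: "restrict b (X \<inter> Y) \<in> basis d (X \<inter> Y)"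
        using restrict_in_basis[OF a, of "X \<inter> Y"] restrict_in_basis[OF b, of "X \<inter> Y"] \<open>X \<subseteq> V\<close>
        by auto
      have "partial_trace d Y X (\<sigma>s Y) (restrict a (X \<inter> Y)) (restrict b (X \<inter> Y))
          = partial_trace d V (X \<inter> Y) \<rho> (restrict a (X \<inter> Y)) (restrict b (X \<inter> Y))"
        unfolding partial_trace_restrict_Int
        using partial_trace_tensor_block[OF \<eta> \<open>finite V\<close> tr\<eta> Y _ aXY bXY, folded \<rho>\<eta>] by simp
      then show ?thesis
        using False aXY bXY by (simp add: marginal_def)
    qed
  qed
  finally show ?thesis .
qed

lemma tensor_partition_inf:
  assumes \<xi>: "partition_on V \<xi>" and \<eta>: "partition_on V \<eta>" and "finite V"
    and "\<forall>X\<in>\<xi>. op_trace d X (\<rho>s X) = 1" and \<rho>\<xi>: "\<rho> = tensor d V \<xi> \<rho>s"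
    and "\<forall>Y\<in>\<eta>. op_trace d Y (\<sigma>s Y) = 1" and "\<rho> = tensor d V \<eta> \<sigma>s"
  shows "\<rho> = tensor d V (partition_inf \<xi> \<eta>) (\<lambda>Z. marginal d V Z \<rho>)"
proof (intro ext)
  fix a b
  show "\<rho> a b = tensor d V (partition_inf \<xi> \<eta>) (\<lambda>Z. marginal d V Z \<rho>) a b"
  proof (cases "a \<in> basis d V \<and> b \<in> basis d V")
    case True
    then have "\<rho> a b = (\<Prod>X\<in>\<xi>. \<rho>s X (restrict a X) (restrict b X))"
      by (simp only: \<rho>\<xi> tensor_apply)
    also have "\<dots> = (\<Prod>X\<in>\<xi>. \<Prod>Y\<in>\<eta>. if X \<inter> Y = {} then 1
                  else marginal d V (X \<inter> Y) \<rho> (restrict a (X \<inter> Y)) (restrict b (X \<inter> Y)))"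
      using True by (intro prod.cong refl tensor_factor_eq_prod_marginal[OF assms]) auto
    also have "\<dots> = tensor d V (partition_inf \<xi> \<eta>) (\<lambda>Z. marginal d V Z \<rho>) a b"
      using True prod_partition_inf[OF \<xi> \<eta> \<open>finite V\<close>,
          where f = "\<lambda>Z. marginal d V Z \<rho> (restrict a Z) (restrict b Z)"]
      by (simp add: tensor_apply)
    finally show ?thesis .
  next
    case False
    moreover have "\<rho> a b = 0"
      using False by (simp only: \<rho>\<xi> tensor_def) simp
    ultimately show ?thesis
      unfolding tensor_def by auto
  qed
qed

lemma finite_partitions: "finite (partitions n)"
  using finitely_many_partition_on[of "sites n"] by (simp add: partitions_def sites_def)

lemma density_of_unc: "\<rho> \<in> unc d n \<xi> \<Longrightarrow> density d (sites n) \<rho>"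
  by (simp add: unc_def densities_def)

lemma unc_partition_inf:
  assumes "\<xi> \<in> partitions n" "\<eta> \<in> partitions n" "\<rho> \<in> unc d n \<xi>" "\<rho> \<in> unc d n \<eta>"
  shows "partition_inf \<xi> \<eta> \<in> partitions n" "\<rho> \<in> unc d n (partition_inf \<xi> \<eta>)"
proof -
  have \<xi>: "partition_on (sites n) \<xi>" and \<eta>: "partition_on (sites n) \<eta>"
    using assms by (auto simp: partitions_def)
  then have inf: "partition_on (sites n) (partition_inf \<xi> \<eta>)"
    by (rule partition_on_partition_inf)
  then show "partition_inf \<xi> \<eta> \<in> partitions n"
    by (simp add: partitions_def)
  obtain \<rho>s where \<rho>s: "\<forall>X\<in>\<xi>. density d X (\<rho>s X)" "\<rho> = tensor d (sites n) \<xi> \<rho>s"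
    using assms(3) by (auto simp: unc_def densities_def)
  obtain \<sigma>s where \<sigma>s: "\<forall>Y\<in>\<eta>. density d Y (\<sigma>s Y)" "\<rho> = tensor d (sites n) \<eta> \<sigma>s"
    using assms(4) by (auto simp: unc_def densities_def)
  have "finite (sites n)"
    by (simp add: sites_def)
  then have "\<rho> = tensor d (sites n) (partition_inf \<xi> \<eta>) (\<lambda>Z. marginal d (sites n) Z \<rho>)"
    using tensor_partition_inf[OF \<xi> \<eta>] \<rho>s \<sigma>s by (simp add: density_iff)
  moreover have "\<forall>Z\<in>partition_inf \<xi> \<eta>. density d Z (marginal d (sites n) Z \<rho>)"
    using density_marginal[OF density_of_unc[OF assms(3)]] inf \<open>finite (sites n)\<close>
    by (auto simp: partition_on_def)
  ultimately show "\<rho> \<in> unc d n (partition_inf \<xi> \<eta>)"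
    using density_of_unc[OF assms(3)] by (auto simp: unc_def densities_def)
qed

lemma unc_trivial_partition:
  assumes "n \<ge> 1" and \<rho>: "density d (sites n) \<rho>"
  shows "{sites n} \<in> partitions n" "\<rho> \<in> unc d n {sites n}"
proof -
  have "sites n \<noteq> {}"
    using assms(1) by (auto simp: sites_def)
  then show "{sites n} \<in> partitions n"
    by (simp add: partitions_def partition_on_space)
  have "\<rho> = tensor d (sites n) {sites n} (\<lambda>_. \<rho>)"
    using density_vanishes[OF \<rho>]
    by (auto simp: tensor_def fun_eq_iff restrict_basis_superset)
  then show "\<rho> \<in> unc d n {sites n}"
    using \<rho> by (auto simp: unc_def densities_def)
qed

definition finest_unc :: "(nat \<Rightarrow> nat) \<Rightarrow> nat \<Rightarrow> op \<Rightarrow> nat set set \<Rightarrow> bool" where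
  "finest_unc d n \<rho> \<mu> \<longleftrightarrow> \<mu> \<in> partitions n \<and> \<rho> \<in> unc d n \<mu> \<and>
     (\<forall>\<eta>\<in>partitions n. \<rho> \<in> unc d n \<eta> \<longrightarrow> refines \<mu> \<eta>)"

lemma finest_unc_exists:
  assumes "n \<ge> 1" "density d (sites n) \<rho>"
  obtains \<mu> where "finest_unc d n \<rho> \<mu>"
proof -
  define S where "S = {\<eta> \<in> partitions n. \<rho> \<in> unc d n \<eta>}"
  have "\<exists>\<mu>\<in>S. \<forall>\<eta>\<in>F. refines \<mu> \<eta>" if "finite F" "F \<noteq> {}" "F \<subseteq> S" for F
    using that
  proof (induction F rule: finite_ne_induct)
    case (singleton \<eta>)
    then show ?case
      by (auto simp: refines_def)
  next
    case (insert \<eta> F)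
    then obtain \<mu> where "\<mu> \<in> S" and \<mu>: "\<forall>\<eta>'\<in>F. refines \<mu> \<eta>'"
      by blast
    then have "partition_inf \<mu> \<eta> \<in> S"
      using unc_partition_inf[of \<mu> n \<eta> \<rho> d] insert.prems by (auto simp: S_def)
    moreover have "\<forall>\<eta>'\<in>insert \<eta> F. refines (partition_inf \<mu> \<eta>) \<eta>'"
      using \<mu> refines_partition_inf[of \<mu> \<eta>] refines_trans by blast
    ultimately show ?case
      by blast
  qed
  moreover have "finite S" "S \<noteq> {}"
    using finite_partitions unc_trivial_partition[OF assms] by (auto simp: S_def)
  ultimately obtain \<mu> where "\<mu> \<in> S" "\<forall>\<eta>\<in>S. refines \<mu> \<eta>"
    by blast
  then show ?thesis
    using that by (auto simp: finest_unc_def S_def)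
qed

lemma uncS_iff_finest:
  assumes "s \<in> P_II n" "finest_unc d n \<rho> \<mu>"
  shows "\<rho> \<in> uncS d n s \<longleftrightarrow> \<mu> \<in> s"
  using assms unfolding uncS_def P_II_def finest_unc_def by blast

lemma C_unc_iff_finest:
  assumes "\<Xi> \<subseteq> PIIs" "PIIs \<subseteq> P_II n" and \<mu>: "finest_unc d n \<rho> \<mu>"
  shows "\<rho> \<in> C_unc d n PIIs \<Xi> \<longleftrightarrow> \<mu> \<in> meet \<Xi> - join_compl PIIs \<Xi>"
proof -
  have "\<rho> \<in> densities d (sites n)"
    using \<mu> density_of_unc by (auto simp: finest_unc_def densities_def)
  then have "\<rho> \<in> C_unc d n PIIs \<Xi> \<longleftrightarrow> (\<forall>s\<in>PIIs - \<Xi>. \<rho> \<notin> uncS d n s) \<and> (\<forall>s\<in>\<Xi>. \<rho> \<in> uncS d n s)"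
    unfolding C_unc_def by blast
  also have "\<dots> \<longleftrightarrow> (\<forall>s\<in>PIIs - \<Xi>. \<mu> \<notin> s) \<and> (\<forall>s\<in>\<Xi>. \<mu> \<in> s)"
    using uncS_iff_finest[OF _ \<mu>] assms(1,2) by blast
  finally show ?thesis
    unfolding meet_def join_compl_def by blast
qed

lemma density_of_C_unc: "\<rho> \<in> C_unc d n PIIs \<Xi> \<Longrightarrow> \<Xi> \<noteq> {} \<Longrightarrow> density d (sites n) \<rho>"
  by (auto simp: C_unc_def uncS_def density_of_unc)

definition pure_state :: "((nat \<Rightarrow> nat) \<Rightarrow> complex) \<Rightarrow> op" where
  "pure_state \<psi> a b = \<psi> a * cnj (\<psi> b)"

lemma density_pure_state:
  assumes "\<And>a. \<psi> a \<noteq> 0 \<Longrightarrow> a \<in> basis d V" and "(\<Sum>a\<in>basis d V. \<psi> a * cnj (\<psi> a)) = 1"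
  shows "density d V (pure_state \<psi>)"
proof -
  have "Im (qform d V (pure_state \<psi>) v) = 0 \<and> Re (qform d V (pure_state \<psi>) v) \<ge> 0" for v
  proof -
    define s where "s = (\<Sum>b\<in>basis d V. cnj (\<psi> b) * v b)"
    have "qform d V (pure_state \<psi>) v = (\<Sum>a\<in>basis d V. cnj (v a) * \<psi> a) * s"
      unfolding qform_def pure_state_def s_def sum_product by (simp add: mult_ac)
    also have "\<dots> = s * cnj s"
      by (simp add: s_def mult_ac)
    also have "\<dots> = complex_of_real ((Re s)\<^sup>2 + (Im s)\<^sup>2)"
      by (rule complex_mult_cnj)
    finally show ?thesis
      by simp
  qed
  then show ?thesis
    using assms by (auto simp: density_iff pure_state_def op_trace_def)
qed

definition const_index :: "nat \<Rightarrow> nat set \<Rightarrow> nat \<Rightarrow> nat" where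
  "const_index k X = restrict (\<lambda>_. k) X"

text \<open>The GHZ vector \<open>(|0\<dots>0\<rangle> + |1\<dots>1\<rangle>)/\<surd>2\<close> on the block \<open>X\<close>, and the product of GHZ
  vectors over the blocks of a partition; its pure state is uncorrelated exactly with
  respect to the coarsenings of that partition.\<close>

definition ghz :: "nat set \<Rightarrow> (nat \<Rightarrow> nat) \<Rightarrow> complex" where
  "ghz X p = (if p = const_index 0 X \<or> p = const_index 1 X then of_real (sqrt (1/2)) else 0)"

definition ghz_product :: "(nat \<Rightarrow> nat) \<Rightarrow> nat set \<Rightarrow> nat set set \<Rightarrow> (nat \<Rightarrow> nat) \<Rightarrow> complex" where
  "ghz_product d V \<xi> a = (if a \<in> basis d V then \<Prod>X\<in>\<xi>. ghz X (restrict a X) else 0)"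

lemma const_index_in_basis: "\<forall>i\<in>X. 1 < d i \<Longrightarrow> k \<le> 1 \<Longrightarrow> const_index k X \<in> basis d X"
  by (auto simp: const_index_def basis_def)

lemma ghz_in_basis: "\<forall>i\<in>X. 1 < d i \<Longrightarrow> ghz X p \<noteq> 0 \<Longrightarrow> p \<in> basis d X"
  using const_index_in_basis[of X d 0] const_index_in_basis[of X d 1]
  by (auto simp: ghz_def split: if_splits)

lemma sum_ghz_norm:
  assumes "X \<noteq> {}" "finite X" "\<forall>i\<in>X. 1 < d i"
  shows "(\<Sum>p\<in>basis d X. ghz X p * cnj (ghz X p)) = 1"
proof -
  have distinct: "const_index 0 X \<noteq> const_index 1 X"
    using assms(1) by (auto simp: const_index_def fun_eq_iff)
  have "(\<Sum>p\<in>basis d X. ghz X p * cnj (ghz X p))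
      = (\<Sum>p\<in>basis d X. if p \<in> {const_index 0 X, const_index 1 X} then 1/2 else 0)"
    by (intro sum.cong refl) (auto simp: ghz_def simp flip: of_real_mult)
  also have "\<dots> = (\<Sum>p\<in>basis d X \<inter> {const_index 0 X, const_index 1 X}. 1/2)"
    by (rule sum.inter_restrict[OF finite_basis[OF assms(2)], symmetric])
  also have "basis d X \<inter> {const_index 0 X, const_index 1 X} = {const_index 0 X, const_index 1 X}"
    using const_index_in_basis[OF assms(3), of 0] const_index_in_basis[OF assms(3), of 1] by auto
  also have "(\<Sum>p\<in>{const_index 0 X, const_index 1 X}. 1/2) = (1::complex)"
    using distinct by simp
  finally show ?thesis .
qed

lemma ghz_product_nonzero_iff:
  "finite \<xi> \<Longrightarrow> a \<in> basis d V \<Longrightarrow>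
     ghz_product d V \<xi> a \<noteq> 0 \<longleftrightarrow> (\<forall>X\<in>\<xi>. restrict a X \<in> {const_index 0 X, const_index 1 X})"
  by (auto simp: ghz_product_def ghz_def)

lemma pure_ghz_product_eq_tensor:
  "pure_state (ghz_product d V \<xi>) = tensor d V \<xi> (\<lambda>X. pure_state (ghz X))"
  by (auto simp: fun_eq_iff pure_state_def ghz_product_def tensor_def prod.distrib)

lemma density_pure_ghz_product:
  assumes \<xi>: "partition_on V \<xi>" and "finite V" and dims: "\<forall>i\<in>V. 1 < d i"
  shows "density d V (pure_state (ghz_product d V \<xi>))"
proof (rule density_pure_state)
  show "a \<in> basis d V" if "ghz_product d V \<xi> a \<noteq> 0" for a
    using that by (simp add: ghz_product_def split: if_splits)
  have "finite \<xi>"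
    using assms finite_elements by blast
  moreover have "disjoint_family_on (\<lambda>X. X) \<xi>"
    using \<xi> by (auto simp: disjoint_family_on_def partition_on_def disjoint_def)
  moreover have "(\<Union>X\<in>\<xi>. X) = V"
    using \<xi> by (simp add: partition_on_def)
  moreover have "(\<Sum>p\<in>basis d X. ghz X p * cnj (ghz X p)) = 1" if "X \<in> \<xi>" for X
    using that \<xi> \<open>finite V\<close> dims
    by (intro sum_ghz_norm) (auto simp: partition_on_def intro: finite_subset)
  ultimately show "(\<Sum>a\<in>basis d V. ghz_product d V \<xi> a * cnj (ghz_product d V \<xi> a)) = 1"
    using sum_basis_UN_prod[where S = "\<lambda>X. X" and d = d and \<eta> = \<xi>
        and g = "\<lambda>X p. ghz X p * cnj (ghz X p)"]
    by (simp add: ghz_product_def prod.distrib)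
qed

lemma pure_ghz_product_unc:
  assumes "\<xi> \<in> partitions n" and dims: "\<forall>i\<in>sites n. 1 < d i"
  shows "pure_state (ghz_product d (sites n) \<xi>) \<in> unc d n \<xi>"
proof -
  have \<xi>: "partition_on (sites n) \<xi>" and "finite (sites n)"
    using assms by (simp_all add: partitions_def sites_def)
  have "density d X (pure_state (ghz X))" if "X \<in> \<xi>" for X
  proof (rule density_pure_state)
    have "X \<noteq> {}" "X \<subseteq> sites n"
      using \<xi> that by (auto simp: partition_on_def)
    then show "(\<Sum>p\<in>basis d X. ghz X p * cnj (ghz X p)) = 1"
      using dims \<open>finite (sites n)\<close> by (intro sum_ghz_norm) (auto intro: finite_subset)
    show "p \<in> basis d X" if "ghz X p \<noteq> 0" for p
      using ghz_in_basis[OF _ that] dims \<open>X \<subseteq> sites n\<close> by blast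
  qed
  then show ?thesis
    using density_pure_ghz_product[OF \<xi> \<open>finite (sites n)\<close> dims]
    by (auto simp: unc_def densities_def pure_ghz_product_eq_tensor
        intro!: exI[of _ "\<lambda>X. pure_state (ghz X)"])
qed

lemma tensor_swap_block:
  assumes \<eta>: "partition_on V \<eta>" and Y: "Y \<in> \<eta>"
    and a: "a \<in> basis d V" and b: "b \<in> basis d V" and a': "a' \<in> basis d V" and b': "b' \<in> basis d V"
  shows "tensor d V \<eta> \<sigma>s a b * tensor d V \<eta> \<sigma>s a' b'
       = tensor d V \<eta> \<sigma>s (merge Y a a') (merge Y b b') * tensor d V \<eta> \<sigma>s (merge Y a' a) (merge Y b' b)"
proof -
  have restrict_merge_block:
    "restrict (merge Y x x') Y' = (if Y' = Y then restrict x Y' else restrict x' Y')" if "Y' \<in> \<eta>" for x x' Y'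
    using \<eta> Y that by (auto simp: restrict_merge_same intro!: restrict_merge_disjoint
        dest: partition_onD2 disjointD)
  have "tensor d V \<eta> \<sigma>s (merge Y a a') (merge Y b b') * tensor d V \<eta> \<sigma>s (merge Y a' a) (merge Y b' b)
      = (\<Prod>Y'\<in>\<eta>. \<sigma>s Y' (restrict (merge Y a a') Y') (restrict (merge Y b b') Y') *
                   \<sigma>s Y' (restrict (merge Y a' a) Y') (restrict (merge Y b' b) Y'))"
    by (simp add: tensor_apply merge_in_basis a b a' b' prod.distrib)
  also have "\<dots> = (\<Prod>Y'\<in>\<eta>. \<sigma>s Y' (restrict a Y') (restrict b Y') * \<sigma>s Y' (restrict a' Y') (restrict b' Y'))"
    by (intro prod.cong refl) (simp add: restrict_merge_block)
  also have "\<dots> = tensor d V \<eta> \<sigma>s a b * tensor d V \<eta> \<sigma>s a' b'"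
    by (simp add: tensor_apply a b a' b' prod.distrib)
  finally show ?thesis ..
qed

text \<open>Exchanging the \<open>Y\<close>-parts of \<open>z = 0\<dots>0\<close> and of the index \<open>w\<close> that is \<open>1\<close> exactly on \<open>X\<close>
  produces an index that is \<open>1\<close> at \<open>i\<close> and \<open>0\<close> at \<open>j\<close>, where the GHZ product vanishes; for an
  \<open>\<eta>\<close>-uncorrelated state this exchange preserves the product of the two matrix entries.\<close>

lemma pure_ghz_product_not_unc:
  assumes \<xi>: "partition_on (sites n) \<xi>" and \<eta>: "partition_on (sites n) \<eta>"
    and dims: "\<forall>i\<in>sites n. 1 < d i"
    and X: "X \<in> \<xi>" and Y: "Y \<in> \<eta>" and "i \<in> X" "i \<in> Y" "j \<in> X" "j \<notin> Y"
  shows "pure_state (ghz_product d (sites n) \<xi>) \<notin> unc d n \<eta>"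
proof
  let ?L = "sites n" and ?\<psi> = "ghz_product d (sites n) \<xi>"
  assume "pure_state ?\<psi> \<in> unc d n \<eta>"
  then obtain \<sigma>s where \<sigma>s: "pure_state ?\<psi> = tensor d ?L \<eta> \<sigma>s"
    by (auto simp: unc_def)
  have "finite \<xi>"
    using \<xi> finite_elements by (auto simp: sites_def)
  have "X \<subseteq> ?L"
    using \<xi> X by (auto simp: partition_on_def)
  define z where "z = const_index 0 ?L"
  define w where "w = merge X (const_index 1 ?L) z"
  have z: "z \<in> basis d ?L" and w: "w \<in> basis d ?L"
    using const_index_in_basis[OF dims] by (simp_all add: z_def w_def merge_in_basis)
  have "restrict z X' = const_index 0 X'" "restrict w X' \<in> {const_index 0 X', const_index 1 X'}"
    if "X' \<in> \<xi>" for X'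
    using \<xi> X that partition_onD2[OF \<xi>] \<open>X \<subseteq> ?L\<close>
    by (auto simp: z_def w_def const_index_def merge_def fun_eq_iff partition_on_def
        dest: disjointD)
  then have "?\<psi> z \<noteq> 0" "?\<psi> w \<noteq> 0"
    using ghz_product_nonzero_iff[OF \<open>finite \<xi>\<close>] z w by auto
  moreover have "?\<psi> (merge Y w z) = 0"
  proof -
    have "restrict (merge Y w z) X i = 1" "restrict (merge Y w z) X j = 0"
      using assms(6-9) \<open>X \<subseteq> ?L\<close> by (auto simp: merge_def w_def z_def const_index_def)
    then have "restrict (merge Y w z) X \<notin> {const_index 0 X, const_index 1 X}"
      using \<open>i \<in> X\<close> \<open>j \<in> X\<close> unfolding const_index_def
      by (metis insertE empty_iff restrict_apply' zero_neq_one)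
    then show ?thesis
      using ghz_product_nonzero_iff[OF \<open>finite \<xi>\<close> merge_in_basis[OF w z]] X by blast
  qed
  moreover have "merge Y z z = z"
    by (simp add: merge_def)
  ultimately show False
    using tensor_swap_block[OF \<eta> Y z w z z, of \<sigma>s, folded \<sigma>s]
    by (simp add: pure_state_def)
qed

lemma refines_of_pure_ghz_product_unc:
  assumes "\<xi> \<in> partitions n" "\<eta> \<in> partitions n" and dims: "\<forall>i\<in>sites n. 1 < d i"
    and unc: "pure_state (ghz_product d (sites n) \<xi>) \<in> unc d n \<eta>"
  shows "refines \<xi> \<eta>"
  unfolding refines_def
proof
  have \<xi>: "partition_on (sites n) \<xi>" and \<eta>: "partition_on (sites n) \<eta>"
    using assms by (simp_all add: partitions_def)
  fix X assume X: "X \<in> \<xi>"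
  then obtain i where "i \<in> X" "i \<in> sites n"
    using \<xi> by (metis UnionI all_not_in_conv partition_onD1 partition_onD3)
  then obtain Y where Y: "Y \<in> \<eta>" "i \<in> Y"
    using \<eta> by (auto simp: partition_on_def)
  show "\<exists>Y\<in>\<eta>. X \<subseteq> Y"
  proof (rule ccontr)
    assume "\<not> (\<exists>Y\<in>\<eta>. X \<subseteq> Y)"
    then obtain j where "j \<in> X" "j \<notin> Y"
      using Y by blast
    then show False
      using pure_ghz_product_not_unc[OF \<xi> \<eta> dims X Y(1) \<open>i \<in> X\<close> Y(2)] unc by blast
  qed
qed

lemma finest_unc_pure_ghz_product:
  assumes "\<xi> \<in> partitions n" "\<forall>i\<in>sites n. 1 < d i"
  shows "finest_unc d n (pure_state (ghz_product d (sites n) \<xi>)) \<xi>"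
  using assms pure_ghz_product_unc refines_of_pure_ghz_product_unc by (auto simp: finest_unc_def)

lemma C_unc_subset_iff:
  assumes "n \<ge> 1" "\<forall>i\<in>sites n. 1 < d i" "PIIs \<subseteq> P_II n"
    and "\<Xi> \<subseteq> PIIs" "\<Xi> \<noteq> {}" "\<Upsilon> \<subseteq> PIIs"
  shows "C_unc d n PIIs \<Xi> \<subseteq> C_unc d n PIIs \<Upsilon> \<longleftrightarrow>
    meet \<Xi> - join_compl PIIs \<Xi> \<subseteq> meet \<Upsilon> - join_compl PIIs \<Upsilon>"
proof
  assume C: "C_unc d n PIIs \<Xi> \<subseteq> C_unc d n PIIs \<Upsilon>"
  show "meet \<Xi> - join_compl PIIs \<Xi> \<subseteq> meet \<Upsilon> - join_compl PIIs \<Upsilon>"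
  proof
    fix \<mu> assume \<mu>: "\<mu> \<in> meet \<Xi> - join_compl PIIs \<Xi>"
    then have "\<mu> \<in> partitions n"
      using assms(3-5) unfolding meet_def P_II_def by blast
    then have "finest_unc d n (pure_state (ghz_product d (sites n) \<mu>)) \<mu>"
      using finest_unc_pure_ghz_product assms(2) by blast
    then show "\<mu> \<in> meet \<Upsilon> - join_compl PIIs \<Upsilon>"
      using C \<mu> C_unc_iff_finest assms(3,4,6) by blast
  qed
next
  assume M: "meet \<Xi> - join_compl PIIs \<Xi> \<subseteq> meet \<Upsilon> - join_compl PIIs \<Upsilon>"
  show "C_unc d n PIIs \<Xi> \<subseteq> C_unc d n PIIs \<Upsilon>"
  proof
    fix \<rho> assume \<rho>: "\<rho> \<in> C_unc d n PIIs \<Xi>"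
    obtain \<mu> where "finest_unc d n \<rho> \<mu>"
      using finest_unc_exists[OF assms(1) density_of_C_unc[OF \<rho> assms(5)]] .
    then show "\<rho> \<in> C_unc d n PIIs \<Upsilon>"
      using \<rho> M C_unc_iff_finest assms(3,4,6) by blast
  qed
qed

theorem proposition2:
  fixes n :: nat and d :: "nat \<Rightarrow> nat"
    and PIIs :: "nat set set set set" and \<Xi> \<Upsilon> :: "nat set set set set"
  assumes "n \<ge> 1"
    and "\<forall>i\<in>sites n. 1 < d i"
    and "PIIs \<subseteq> P_II n" and "PIIs \<noteq> {}"
    and "\<Xi> \<in> P_III PIIs" and "\<Upsilon> \<in> P_III PIIs"
  shows "C_unc d n PIIs \<Xi> = C_unc d n PIIs \<Upsilon> \<longleftrightarrow>
    (meet \<Xi> \<inter> join_compl PIIs \<Upsilon> \<subseteq> join_compl PIIs \<Xi> \<and>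
     meet \<Xi> \<subseteq> join_compl PIIs \<Xi> \<union> meet \<Upsilon> \<and>
     meet \<Upsilon> \<inter> join_compl PIIs \<Xi> \<subseteq> join_compl PIIs \<Upsilon> \<and>
     meet \<Upsilon> \<subseteq> join_compl PIIs \<Upsilon> \<union> meet \<Xi>)"
proof -
  have "\<Xi> \<subseteq> PIIs" "\<Xi> \<noteq> {}" "\<Upsilon> \<subseteq> PIIs" "\<Upsilon> \<noteq> {}"
    using assms(5,6) by (auto simp: P_III_def)
  then have "C_unc d n PIIs \<Xi> = C_unc d n PIIs \<Upsilon> \<longleftrightarrow>
      meet \<Xi> - join_compl PIIs \<Xi> = meet \<Upsilon> - join_compl PIIs \<Upsilon>"
    using C_unc_subset_iff[OF assms(1-3)] by (metis subset_antisym order_refl)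
  then show ?thesis
    by blast
qed

end
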